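(* Let $d\ge0$ and $\alpha_{d+1}>0$. For the Gaussian broadcast model on $P=\mathcal{HS}_{d+1}$, local reconstruction is possible if and only if single-vertex reconstruction is possible.
   Context: Gaussian broadcast model: Let $d\ge 0$ and let $P$ be an infinite graded poset with layers $L_0,L_1,\dots$ ($L_t$ = elements of rank $t$, $L_0$ = minimal elements), in which every element covers at most $d+1$ elements. For $v\in P$ let $\mathfrak p(v)$ be the set of elements covered by $v$. Given $\alpha_1,\dots,\alpha_{d+1}>0$, let $X_0\sim\mathcal N(0,1)$ and, independently, let $W_{u\to v}$ be i.i.d. $\mathcal N(0,1)$ indexed by covering pairs $u\lessdot v$. Set $X_v=X_0$ for $v\in L_0$, and for $v$ of rank $\ge1$ set $X_v=\alpha_{|\mathfrak p(v)|}\sum_{u\in\mathfrak p(v)}(X_u+W_{u\to v})$. Infinite model: $\mathcal{HS}_{d+1}=\{(x_1,\dots,x_{d+1})\in\mathbb Z^{d+1}: x_1+\dots+x_{d+1}\ge0\}$ with $u\le v$ iff $v-u\in\mathbb Z_{\ge0}^{d+1}$; $L_t$ is the set of points with coordinate sum $t$; every element of rank $\ge1$ covers exactly $d+1$ elements. A window of width $N$ is a set $\big([x_1,x_1+N)\times\cdots\times[x_{d+1},x_{d+1}+N)\big)\cap P$ with $x_i\in\mathbb Z$. Local reconstruction is possible if there exist a finite $N$, windows $\mathcal W_t$ ($t\ge0$) of width $N$, and $c:P\to\mathbb R$ with $c|_{L_t}$ supported on $\mathcal W_t$, such that $\zeta_t:=\sum_{u\in L_t}c_uX_u$ satisfies $\operatorname{Var}(\zeta_t)>0$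 for all $t$ and $\operatorname{corr}(\zeta_t,X_0)$ does not converge to $0$ as $t\to\infty$. Single-vertex reconstruction is possible if this can be done with $N=1$. *)

theory Defs
  imports "HOL-Probability.Probability"
begin

text \<open>Points of Z^(d+1) are represented as functions nat => int vanishing outside {0..d}
  (coordinates x_1..x_(d+1) are x 0 .. x d).\<close>

definition HS :: "nat \<Rightarrow> (nat \<Rightarrow> int) set" where
  "HS d = {x. (\<forall>i>d. x i = 0) \<and> (\<Sum>i\<le>d. x i) \<ge> 0}"

definition rank :: "nat \<Rightarrow> (nat \<Rightarrow> int) \<Rightarrow> int" where
  "rank d x = (\<Sum>i\<le>d. x i)"

definition layer :: "nat \<Rightarrow> nat \<Rightarrow> (nat \<Rightarrow> int) set" where
  "layer d t = {x \<in> HS d. rank d x = int t}"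

definition unitv :: "nat \<Rightarrow> nat \<Rightarrow> int" where
  "unitv i = (\<lambda>j. if j = i then 1 else 0)"

definition covers :: "nat \<Rightarrow> (nat \<Rightarrow> int) \<Rightarrow> (nat \<Rightarrow> int) \<Rightarrow> bool" where
  "covers d u v \<longleftrightarrow> u \<in> HS d \<and> v \<in> HS d \<and> (\<exists>i\<le>d. v = (\<lambda>j. u j + unitv i j))"

definition parents :: "nat \<Rightarrow> (nat \<Rightarrow> int) \<Rightarrow> (nat \<Rightarrow> int) set" where
  "parents d v = {u. covers d u v}"

definition covpairs :: "nat \<Rightarrow> ((nat \<Rightarrow> int) \<times> (nat \<Rightarrow> int)) set" where
  "covpairs d = {(u, v). covers d u v}"

primrec Xr :: "nat \<Rightarrow> (nat \<Rightarrow> real) \<Rightarrow> ('a \<Rightarrow> real)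
    \<Rightarrow> ((nat \<Rightarrow> int) \<times> (nat \<Rightarrow> int) \<Rightarrow> 'a \<Rightarrow> real) \<Rightarrow> nat \<Rightarrow> (nat \<Rightarrow> int) \<Rightarrow> 'a \<Rightarrow> real" where
  "Xr d \<alpha> X0 W 0 v = X0"
| "Xr d \<alpha> X0 W (Suc t) v =
     (\<lambda>\<omega>. \<alpha> (card (parents d v)) * (\<Sum>u\<in>parents d v. Xr d \<alpha> X0 W t u \<omega> + W (u, v) \<omega>))"

definition Xv :: "nat \<Rightarrow> (nat \<Rightarrow> real) \<Rightarrow> ('a \<Rightarrow> real)
    \<Rightarrow> ((nat \<Rightarrow> int) \<times> (nat \<Rightarrow> int) \<Rightarrow> 'a \<Rightarrow> real) \<Rightarrow> (nat \<Rightarrow> int) \<Rightarrow> 'a \<Rightarrow> real" where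
  "Xv d \<alpha> X0 W v = Xr d \<alpha> X0 W (nat (rank d v)) v"

definition gaussian_model :: "'a measure \<Rightarrow> nat \<Rightarrow> ('a \<Rightarrow> real)
    \<Rightarrow> ((nat \<Rightarrow> int) \<times> (nat \<Rightarrow> int) \<Rightarrow> 'a \<Rightarrow> real) \<Rightarrow> bool" where
  "gaussian_model M d X0 W \<longleftrightarrow>
     prob_space M \<and>
     distributed M lborel X0 (\<lambda>x. ennreal (std_normal_density x)) \<and>
     (\<forall>e\<in>covpairs d. distributed M lborel (W e) (\<lambda>x. ennreal (std_normal_density x))) \<and>
     prob_space.indep_vars M (\<lambda>_. borel) (\<lambda>k. case k of None \<Rightarrow> X0 | Some e \<Rightarrow> W e)
        (insert None (Some ` covpairs d))"

definition var :: "'a measure \<Rightarrow> ('a \<Rightarrow> real) \<Rightarrow> real" where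
  "var M f = (\<integral>\<omega>. (f \<omega> - (\<integral>\<omega>'. f \<omega>' \<partial>M))\<^sup>2 \<partial>M)"

definition cov :: "'a measure \<Rightarrow> ('a \<Rightarrow> real) \<Rightarrow> ('a \<Rightarrow> real) \<Rightarrow> real" where
  "cov M f g = (\<integral>\<omega>. (f \<omega> - (\<integral>\<omega>'. f \<omega>' \<partial>M)) * (g \<omega> - (\<integral>\<omega>'. g \<omega>' \<partial>M)) \<partial>M)"

definition corr :: "'a measure \<Rightarrow> ('a \<Rightarrow> real) \<Rightarrow> ('a \<Rightarrow> real) \<Rightarrow> real" where
  "corr M f g = cov M f g / sqrt (var M f * var M g)"

definition window :: "nat \<Rightarrow> (nat \<Rightarrow> int) \<Rightarrow> nat \<Rightarrow> (nat \<Rightarrow> int) set" where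
  "window d x N = {v \<in> HS d. \<forall>i\<le>d. x i \<le> v i \<and> v i < x i + int N}"

definition zeta :: "nat \<Rightarrow> (nat \<Rightarrow> real) \<Rightarrow> ('a \<Rightarrow> real)
    \<Rightarrow> ((nat \<Rightarrow> int) \<times> (nat \<Rightarrow> int) \<Rightarrow> 'a \<Rightarrow> real) \<Rightarrow> ((nat \<Rightarrow> int) \<Rightarrow> real) \<Rightarrow> nat \<Rightarrow> 'a \<Rightarrow> real" where
  "zeta d \<alpha> X0 W c t = (\<lambda>\<omega>. \<Sum>u\<in>{u \<in> layer d t. c u \<noteq> 0}. c u * Xv d \<alpha> X0 W u \<omega>)"

definition recon_width :: "'a measure \<Rightarrow> nat \<Rightarrow> (nat \<Rightarrow> real) \<Rightarrow> ('a \<Rightarrow> real)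
    \<Rightarrow> ((nat \<Rightarrow> int) \<times> (nat \<Rightarrow> int) \<Rightarrow> 'a \<Rightarrow> real) \<Rightarrow> nat \<Rightarrow> bool" where
  "recon_width M d \<alpha> X0 W N \<longleftrightarrow>
     (\<exists>(x :: nat \<Rightarrow> nat \<Rightarrow> int) (c :: (nat \<Rightarrow> int) \<Rightarrow> real).
        (\<forall>t. \<forall>u\<in>layer d t. c u \<noteq> 0 \<longrightarrow> u \<in> window d (x t) N) \<and>
        (\<forall>t. var M (zeta d \<alpha> X0 W c t) > 0) \<and>
        \<not> ((\<lambda>t. corr M (zeta d \<alpha> X0 W c t) X0) \<longlonglongrightarrow> 0))"

definition local_reconstruction where
  "local_reconstruction M d \<alpha> X0 W \<longleftrightarrow> (\<exists>N. recon_width M d \<alpha> X0 W N)"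

definition single_vertex_reconstruction where
  "single_vertex_reconstruction M d \<alpha> X0 W \<longleftrightarrow> recon_width M d \<alpha> X0 W 1"

end

theory Submission
  imports Defs "HOL-Library.Function_Algebras"
begin

text \<open>Let a = \<alpha>(d + 1) and b = (d + 1) a. By induction on the rank, each X u of layer t is centred
  with Cov(X u, X0) = b^t, and the noise parts X u - b^t X0 have covariance F t (u - v) for a kernel F
  given by a linear recursion; being a covariance, F t is positive semidefinite. For an estimator
  \<zeta> = \<Sum> c u X u with S = \<Sum> c u and Q = \<Sum> c u c v F t (u - v) this gives
  corr(\<zeta>, X0)^2 = b^2t S^2 / (b^2t S^2 + Q).

  If b < 1, the fresh edge noise gives Q \<ge> a^2 (d + 1) \<Sum> c u^2 \<ge> a^2 (d + 1) S^2 / N^(d+1) on a window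
  of width N, so no local estimator stays correlated. If b > 1, then F t 0 = O(b^2t) and a single
  vertex suffices. If b = 1, the defect F t 0 - F t x is bounded in terms of |x|_1 alone, so F t is
  almost constant on a window; if single-vertex reconstruction fails then F t 0 \<rightarrow> \<infinity>, and
  Cauchy-Schwarz for F t forces Q \<ge> S^2 F t 0 / 4, so local estimators decorrelate as well.\<close>

section \<open>The half-space lattice\<close>

lemma rank_add: "rank d (u + v) = rank d u + rank d v"
  unfolding rank_def by (simp add: sum.distrib)

lemma rank_diff: "rank d (u - v) = rank d u - rank d v"
  unfolding rank_def by (simp add: sum_subtractf)

lemma rank_unitv: "i \<le> d \<Longrightarrow> rank d (unitv i) = 1"
  unfolding rank_def unitv_def by simp

lemma unitv_eq_iff: "unitv i = unitv j \<longleftrightarrow> i = j"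
  unfolding unitv_def by (metis zero_neq_one)

lemma mem_layer_iff: "u \<in> layer d t \<longleftrightarrow> (\<forall>i>d. u i = 0) \<and> rank d u = int t"
  unfolding layer_def HS_def rank_def by auto

lemma diff_unitv_in_layer:
  assumes "u \<in> layer d (Suc t)" "i \<le> d"
  shows "u - unitv i \<in> layer d t"
  using assms rank_unitv[OF assms(2)] unfolding mem_layer_iff by (auto simp: rank_diff unitv_def)

lemma parents_eq:
  assumes u: "u \<in> layer d (Suc t)"
  shows "parents d u = (\<lambda>i. u - unitv i) ` {..d}"
proof -
  have "covers d p u \<longleftrightarrow> p \<in> (\<lambda>i. u - unitv i) ` {..d}" for p
  proof
    assume "covers d p u"
    then obtain i where "i \<le> d" "u = (\<lambda>j. p j + unitv i j)" unfolding covers_def by auto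
    then show "p \<in> (\<lambda>i. u - unitv i) ` {..d}" by (auto simp: fun_eq_iff intro!: image_eqI[of _ _ i])
  next
    assume "p \<in> (\<lambda>i. u - unitv i) ` {..d}"
    then obtain i where i: "i \<le> d" "p = u - unitv i" by auto
    have "p \<in> HS d" using diff_unitv_in_layer[OF u i(1)] unfolding i(2) layer_def by blast
    moreover have "u \<in> HS d" using u unfolding layer_def by auto
    moreover have "u = (\<lambda>j. p j + unitv i j)" using i(2) by (simp add: fun_eq_iff)
    ultimately show "covers d p u" unfolding covers_def using i(1) by blast
  qed
  then show ?thesis unfolding parents_def by auto
qed

lemma inj_on_diff_unitv: "inj_on (\<lambda>i. u - unitv i) A"
  by (rule inj_onI) (metis diff_left_imp_eq unitv_eq_iff)

lemma card_parents: "u \<in> layer d (Suc t) \<Longrightarrow> card (parents d u) = Suc d"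
  by (simp add: parents_eq card_image inj_on_diff_unitv)

lemma sum_parents: "u \<in> layer d (Suc t) \<Longrightarrow> (\<Sum>p\<in>parents d u. f p) = (\<Sum>i\<le>d. f (u - unitv i))"
  by (simp add: parents_eq sum.reindex inj_on_diff_unitv)

lemma parent_in_covpairs: "u \<in> layer d (Suc t) \<Longrightarrow> i \<le> d \<Longrightarrow> (u - unitv i, u) \<in> covpairs d"
  unfolding covpairs_def using parents_eq[of u d t] by (auto simp: parents_def)

lemma Xr_Suc_layer:
  "u \<in> layer d (Suc t) \<Longrightarrow> Xr d \<alpha> X0 W (Suc t) u =
     (\<lambda>\<omega>. \<alpha> (Suc d) * (\<Sum>i\<le>d. Xr d \<alpha> X0 W t (u - unitv i) \<omega> + W (u - unitv i, u) \<omega>))"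
  by (simp add: card_parents sum_parents)

lemma Xv_layer: "u \<in> layer d t \<Longrightarrow> Xv d \<alpha> X0 W u = Xr d \<alpha> X0 W t u"
  unfolding Xv_def mem_layer_iff by simp

definition zero_sum :: "nat \<Rightarrow> (nat \<Rightarrow> int) set" where
  "zero_sum d = {x. (\<forall>i>d. x i = 0) \<and> rank d x = 0}"

lemma zero_in_zero_sum: "0 \<in> zero_sum d"
  unfolding zero_sum_def rank_def by simp

lemma zero_sum_add: "x \<in> zero_sum d \<Longrightarrow> y \<in> zero_sum d \<Longrightarrow> x + y \<in> zero_sum d"
  unfolding zero_sum_def by (simp add: rank_add)

lemma zero_sum_diff: "x \<in> zero_sum d \<Longrightarrow> y \<in> zero_sum d \<Longrightarrow> x - y \<in> zero_sum d"
  unfolding zero_sum_def by (simp add: rank_diff)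

lemma unitv_diff_in_zero_sum: "i \<le> d \<Longrightarrow> j \<le> d \<Longrightarrow> unitv i - unitv j \<in> zero_sum d"
  unfolding zero_sum_def by (simp add: rank_diff rank_unitv) (simp add: unitv_def)

lemma layer_diff_in_zero_sum: "u \<in> layer d t \<Longrightarrow> v \<in> layer d t \<Longrightarrow> u - v \<in> zero_sum d"
  unfolding zero_sum_def mem_layer_iff by (simp add: rank_diff)

lemma zero_sum_add_layer: "x \<in> zero_sum d \<Longrightarrow> u \<in> layer d t \<Longrightarrow> x + u \<in> layer d t"
  unfolding zero_sum_def mem_layer_iff by (simp add: rank_add)

lemma zero_sum_nonzero_signs:
  assumes x: "x \<in> zero_sum d" and "x \<noteq> 0"
  obtains i j where "i \<le> d" "0 < x i" "j \<le> d" "x j < 0"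
proof -
  have supp: "\<forall>k>d. x k = 0" and sum0: "(\<Sum>k\<le>d. x k) = 0"
    using x unfolding zero_sum_def rank_def by auto
  obtain k where k: "k \<le> d" "x k \<noteq> 0"
    using \<open>x \<noteq> 0\<close> supp by (metis not_le zero_fun_def ext)
  have "\<exists>i\<le>d. 0 < x i"
  proof (rule ccontr)
    assume "\<not> ?thesis"
    then have "\<forall>i\<in>{..d}. 0 \<le> - x i" by auto
    moreover have "(\<Sum>i\<le>d. - x i) = 0" using sum0 by (simp add: sum_negf)
    ultimately show False using k sum_nonneg_eq_0_iff[of "{..d}" "\<lambda>i. - x i"] by auto
  qed
  moreover have "\<exists>j\<le>d. x j < 0"
  proof (rule ccontr)
    assume "\<not> ?thesis"
    then have "\<forall>j\<in>{..d}. 0 \<le> x j" by (auto simp: not_less)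
    then show False using k sum0 sum_nonneg_eq_0_iff[of "{..d}" x] by auto
  qed
  ultimately show ?thesis using that by blast
qed

definition axis_point :: "nat \<Rightarrow> nat \<Rightarrow> int" where
  "axis_point t = (\<lambda>i. if i = 0 then int t else 0)"

lemma axis_point_in_layer: "axis_point t \<in> layer d t"
  unfolding mem_layer_iff axis_point_def rank_def by simp

lemma layer_eq_axis_point: "axis_point s \<in> layer d t \<Longrightarrow> s = t"
  unfolding mem_layer_iff axis_point_def rank_def by simp

definition l1_norm :: "nat \<Rightarrow> (nat \<Rightarrow> int) \<Rightarrow> int" where
  "l1_norm d x = (\<Sum>k\<le>d. \<bar>x k\<bar>)"

lemma finite_window: "finite (window d y N)"
  and card_window_le: "card (window d y N) \<le> N ^ Suc d"
proof -
  define f where "f v = restrict v {..d}" for v :: "nat \<Rightarrow> int"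
  define P where "P = (\<Pi>\<^sub>E i\<in>{..d}. {y i..<y i + int N})"
  have inj: "inj_on f (window d y N)"
  proof (rule inj_onI)
    fix v w assume v: "v \<in> window d y N" and w: "w \<in> window d y N" and e: "f v = f w"
    show "v = w"
    proof
      fix i show "v i = w i"
      proof (cases "i \<le> d")
        case True then show ?thesis using e unfolding f_def by (metis atMost_iff restrict_apply')
      next
        case False then show ?thesis using v w unfolding window_def HS_def by auto
      qed
    qed
  qed
  have sub: "f ` window d y N \<subseteq> P"
  proof (rule image_subsetI)
    fix v assume "v \<in> window d y N"
    then show "f v \<in> P" unfolding f_def P_def restrict_PiE_iff window_def by auto
  qed
  have finP: "finite P" unfolding P_def by (intro finite_PiE) auto
  have cardP: "card P = N ^ Suc d" unfolding P_def by (simp add: card_PiE)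
  show "finite (window d y N)" using finite_imageD[OF finite_subset[OF sub finP] inj] .
  show "card (window d y N) \<le> N ^ Suc d" using card_inj_on_le[OF inj sub finP] cardP by simp
qed

lemma l1_norm_window_diff:
  assumes "u \<in> window d y N" "v \<in> window d y N"
  shows "l1_norm d (u - v) \<le> int (Suc d * N)"
proof -
  have "l1_norm d (u - v) \<le> (\<Sum>k\<le>d. int N)" unfolding l1_norm_def
  proof (intro sum_mono)
    fix k assume "k \<in> {..d}"
    then show "\<bar>(u - v) k\<bar> \<le> int N" using assms unfolding window_def by fastforce
  qed
  then show ?thesis by (simp add: algebra_simps)
qed

lemma l1_norm_diff_unitv_less:
  assumes x: "x \<in> zero_sum d" and "x \<noteq> 0"
  obtains i j where "i \<le> d" "j \<le> d" "l1_norm d (x - (unitv i - unitv j)) < l1_norm d x"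
proof -
  obtain i j where i: "i \<le> d" "0 < x i" and j: "j \<le> d" "x j < 0"
    using zero_sum_nonzero_signs[OF assms] by blast
  define y where "y = x - (unitv i - unitv j)"
  have "l1_norm d y < l1_norm d x" unfolding l1_norm_def
  proof (rule sum_strict_mono_ex1)
    have "y k = x k - (if k = i then 1 else 0) + (if k = j then 1 else 0)" for k
      unfolding y_def unitv_def by simp
    then show "\<forall>k\<in>{..d}. \<bar>y k\<bar> \<le> \<bar>x k\<bar>" "\<exists>k\<in>{..d}. \<bar>y k\<bar> < \<bar>x k\<bar>"
      using i j by (auto intro!: bexI[of _ i])
  qed simp
  then show ?thesis using that i(1) j(1) unfolding y_def by blast
qed

definition axis_weights :: "(nat \<Rightarrow> int) \<Rightarrow> real" where
  "axis_weights u = (if u \<in> range axis_point then 1 else 0)"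

lemma axis_weights_support: "{u \<in> layer d t. axis_weights u \<noteq> 0} = {axis_point t}"
  by (auto simp: axis_weights_def dest: layer_eq_axis_point) (metis axis_point_in_layer)

section \<open>Independent standard Gaussians\<close>

context prob_space
begin

lemma indep_std_normal_orthonormal:
  assumes indep: "indep_vars (\<lambda>_. borel) Z I"
    and std: "\<And>k. k \<in> I \<Longrightarrow> distributed M lborel (Z k) std_normal_density"
    and kl: "k \<in> I" "l \<in> I"
  shows "integrable M (\<lambda>\<omega>. Z k \<omega> * Z l \<omega>)"
    and "expectation (\<lambda>\<omega>. Z k \<omega> * Z l \<omega>) = (if k = l then 1 else 0)"
proof -
  have int: "i \<in> I \<Longrightarrow> integrable M (Z i)" for i
    using distributed_integrable_var[OF std] integrable_std_normal_moment[of 1] by simp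
  have "integrable M (\<lambda>\<omega>. Z k \<omega> * Z l \<omega>) \<and> expectation (\<lambda>\<omega>. Z k \<omega> * Z l \<omega>) = (if k = l then 1 else 0)"
  proof (cases "k = l")
    case True
    have "integrable M (\<lambda>\<omega>. Z k \<omega> * Z k \<omega>)"
      using distributed_integrable[OF std[OF kl(1)], of "\<lambda>x. x * x"]
        integrable_std_normal_moment[of 2] by (simp add: power2_eq_square)
    moreover have "expectation (\<lambda>\<omega>. Z k \<omega> * Z k \<omega>) = 1"
      using standard_normal_distributed_variance[OF std[OF kl(1)]]
        standard_normal_distributed_expectation[OF std[OF kl(1)]] by (simp add: power2_eq_square)
    ultimately show ?thesis using True by simp
  next
    case False
    have ind: "indep_vars (\<lambda>_. borel) Z {k, l}"
      by (rule indep_vars_subset[OF indep]) (use kl in auto)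
    have kl_int: "i \<in> {k, l} \<Longrightarrow> integrable M (Z i)" for i using int kl by auto
    have prod: "(\<lambda>\<omega>. \<Prod>i\<in>{k, l}. Z i \<omega>) = (\<lambda>\<omega>. Z k \<omega> * Z l \<omega>)" using False by simp
    have "integrable M (\<lambda>\<omega>. \<Prod>i\<in>{k, l}. Z i \<omega>)"
      by (rule indep_vars_integrable[OF _ ind kl_int]) simp
    moreover have "expectation (\<lambda>\<omega>. \<Prod>i\<in>{k, l}. Z i \<omega>) = (\<Prod>i\<in>{k, l}. expectation (Z i))"
      by (rule indep_vars_lebesgue_integral[OF _ ind kl_int]) simp
    ultimately show ?thesis
      using prod False kl standard_normal_distributed_expectation[OF std] by simp
  qed
  then show "integrable M (\<lambda>\<omega>. Z k \<omega> * Z l \<omega>)"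
    and "expectation (\<lambda>\<omega>. Z k \<omega> * Z l \<omega>) = (if k = l then 1 else 0)" by auto
qed

lemma integrable_scaled_sum:
  fixes f g :: "'i \<Rightarrow> 'a \<Rightarrow> real"
  assumes "finite A" "\<And>i. i \<in> A \<Longrightarrow> integrable M (f i)" "\<And>i. i \<in> A \<Longrightarrow> integrable M (g i)"
  shows "integrable M (\<lambda>\<omega>. c * (\<Sum>i\<in>A. f i \<omega> + g i \<omega>))"
  using assms by (intro integrable_mult_right integrable_sum integrable_add) auto

lemma expectation_scaled_sum:
  fixes f g :: "'i \<Rightarrow> 'a \<Rightarrow> real"
  assumes "finite A" "\<And>i. i \<in> A \<Longrightarrow> integrable M (f i)" "\<And>i. i \<in> A \<Longrightarrow> integrable M (g i)"
  shows "expectation (\<lambda>\<omega>. c * (\<Sum>i\<in>A. f i \<omega> + g i \<omega>)) = c * (\<Sum>i\<in>A. expectation (f i) + expectation (g i))"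
  using assms by (simp add: Bochner_Integration.integral_sum integrable_add)

lemma
  fixes f g :: "'i \<Rightarrow> 'a \<Rightarrow> real"
  assumes "finite A" "\<And>i. i \<in> A \<Longrightarrow> integrable M (\<lambda>\<omega>. h \<omega> * f i \<omega>)"
    "\<And>i. i \<in> A \<Longrightarrow> integrable M (\<lambda>\<omega>. h \<omega> * g i \<omega>)"
  shows integrable_mult_scaled_sum: "integrable M (\<lambda>\<omega>. h \<omega> * (c * (\<Sum>i\<in>A. f i \<omega> + g i \<omega>)))"
    and expectation_mult_scaled_sum: "expectation (\<lambda>\<omega>. h \<omega> * (c * (\<Sum>i\<in>A. f i \<omega> + g i \<omega>))) =
      c * (\<Sum>i\<in>A. expectation (\<lambda>\<omega>. h \<omega> * f i \<omega>) + expectation (\<lambda>\<omega>. h \<omega> * g i \<omega>))"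
proof -
  have eq: "(\<lambda>\<omega>. h \<omega> * (c * (\<Sum>i\<in>A. f i \<omega> + g i \<omega>))) =
      (\<lambda>\<omega>. c * (\<Sum>i\<in>A. h \<omega> * f i \<omega> + h \<omega> * g i \<omega>))"
    by (simp add: sum_distrib_left sum.distrib algebra_simps)
  show "integrable M (\<lambda>\<omega>. h \<omega> * (c * (\<Sum>i\<in>A. f i \<omega> + g i \<omega>)))"
    unfolding eq using assms by (rule integrable_scaled_sum)
  show "expectation (\<lambda>\<omega>. h \<omega> * (c * (\<Sum>i\<in>A. f i \<omega> + g i \<omega>))) =
      c * (\<Sum>i\<in>A. expectation (\<lambda>\<omega>. h \<omega> * f i \<omega>) + expectation (\<lambda>\<omega>. h \<omega> * g i \<omega>))"
    unfolding eq using assms by (rule expectation_scaled_sum)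
qed

lemma
  fixes f g :: "'i \<Rightarrow> 'a \<Rightarrow> real"
  assumes "finite A" "\<And>i. i \<in> A \<Longrightarrow> integrable M (\<lambda>\<omega>. f i \<omega> * h \<omega>)"
    "\<And>i. i \<in> A \<Longrightarrow> integrable M (\<lambda>\<omega>. g i \<omega> * h \<omega>)"
  shows integrable_scaled_sum_mult: "integrable M (\<lambda>\<omega>. c * (\<Sum>i\<in>A. f i \<omega> + g i \<omega>) * h \<omega>)"
    and expectation_scaled_sum_mult: "expectation (\<lambda>\<omega>. c * (\<Sum>i\<in>A. f i \<omega> + g i \<omega>) * h \<omega>) =
      c * (\<Sum>i\<in>A. expectation (\<lambda>\<omega>. f i \<omega> * h \<omega>) + expectation (\<lambda>\<omega>. g i \<omega> * h \<omega>))"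
  using integrable_mult_scaled_sum[of A h f g c] expectation_mult_scaled_sum[of A h f g c] assms
  by (simp_all add: mult.commute)

lemma expectation_square_sum:
  fixes Y :: "'i \<Rightarrow> 'a \<Rightarrow> real"
  assumes "finite J" "\<And>j j'. j \<in> J \<Longrightarrow> j' \<in> J \<Longrightarrow> integrable M (\<lambda>\<omega>. Y j \<omega> * Y j' \<omega>)"
  shows "expectation (\<lambda>\<omega>. (\<Sum>j\<in>J. c j * Y j \<omega>)\<^sup>2) =
    (\<Sum>j\<in>J. \<Sum>j'\<in>J. c j * c j' * expectation (\<lambda>\<omega>. Y j \<omega> * Y j' \<omega>))"
proof -
  have "(\<lambda>\<omega>. (\<Sum>j\<in>J. c j * Y j \<omega>)\<^sup>2) = (\<lambda>\<omega>. \<Sum>j\<in>J. \<Sum>j'\<in>J. (c j * c j') * (Y j \<omega> * Y j' \<omega>))"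
    by (simp add: power2_eq_square sum_product algebra_simps)
  then show ?thesis using assms
    by (simp add: Bochner_Integration.integral_sum integrable_sum)
qed

lemma gram_nonneg:
  fixes Y :: "'i \<Rightarrow> 'a \<Rightarrow> real"
  assumes "finite J" "\<And>j j'. j \<in> J \<Longrightarrow> j' \<in> J \<Longrightarrow> integrable M (\<lambda>\<omega>. Y j \<omega> * Y j' \<omega>)"
  shows "0 \<le> (\<Sum>j\<in>J. \<Sum>j'\<in>J. c j * c j' * expectation (\<lambda>\<omega>. Y j \<omega> * Y j' \<omega>))"
proof -
  have "0 \<le> expectation (\<lambda>\<omega>. (\<Sum>j\<in>J. c j * Y j \<omega>)\<^sup>2)" by (rule integral_nonneg_AE) auto
  then show ?thesis using expectation_square_sum[of J Y c] assms by simp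
qed

end

lemma corr_lower_bound:
  fixes V B S Q e :: real
  assumes V: "0 < V" "V = B\<^sup>2 * S\<^sup>2 + Q" and e: "0 < e" "e \<le> \<bar>B * S / sqrt V\<bar>"
  shows "S \<noteq> 0" "e\<^sup>2 * Q \<le> B\<^sup>2 * S\<^sup>2"
proof -
  show "S \<noteq> 0" using e by auto
  have "e\<^sup>2 \<le> \<bar>B * S / sqrt V\<bar>\<^sup>2" using e by (intro power_mono) auto
  also have "\<dots> = B\<^sup>2 * S\<^sup>2 / V" using V(1) by (simp add: power_divide power_mult_distrib)
  finally have "e\<^sup>2 * V \<le> B\<^sup>2 * S\<^sup>2" using V(1) by (simp add: pos_le_divide_eq)
  then have "e\<^sup>2 * Q + e\<^sup>2 * (B\<^sup>2 * S\<^sup>2) \<le> B\<^sup>2 * S\<^sup>2" using V(2) by (simp add: algebra_simps)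
  moreover have "0 \<le> e\<^sup>2 * (B\<^sup>2 * S\<^sup>2)" by simp
  ultimately show "e\<^sup>2 * Q \<le> B\<^sup>2 * S\<^sup>2" by linarith
qed

section \<open>Second moments of the broadcast\<close>

text \<open>For u, v in layer t, noise_kernel d a t (u - v) is the covariance of the noise parts X u - b^t X0
  and X v - b^t X0, where a = \<alpha>(d + 1) and b = (d + 1) a; see second_moments.\<close>
primrec noise_kernel :: "nat \<Rightarrow> real \<Rightarrow> nat \<Rightarrow> (nat \<Rightarrow> int) \<Rightarrow> real" where
  "noise_kernel d a 0 x = 0"
| "noise_kernel d a (Suc t) x = a\<^sup>2 * ((\<Sum>i\<le>d. \<Sum>j\<le>d. noise_kernel d a t (x - unitv i + unitv j))
      + real (Suc d) * (if x = 0 then 1 else 0))"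

lemma noise_kernel_mono: "noise_kernel d a t x \<le> noise_kernel d a (Suc t) x"
proof (induction t arbitrary: x)
  case (Suc t)
  then have "(\<Sum>i\<le>d. \<Sum>j\<le>d. noise_kernel d a t (x - unitv i + unitv j))
      \<le> (\<Sum>i\<le>d. \<Sum>j\<le>d. noise_kernel d a (Suc t) (x - unitv i + unitv j))"
    by (intro sum_mono) auto
  then show ?case
    by (simp only: noise_kernel.simps) (intro mult_left_mono add_right_mono; simp)
qed simp

definition kernel_form ::
    "nat \<Rightarrow> real \<Rightarrow> nat \<Rightarrow> (nat \<Rightarrow> int) set \<Rightarrow> ((nat \<Rightarrow> int) \<Rightarrow> real) \<Rightarrow> real" where
  "kernel_form d a t A c = (\<Sum>u\<in>A. \<Sum>v\<in>A. c u * c v * noise_kernel d a t (u - v))"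

locale gaussian_broadcast =
  fixes M :: "'a measure" and d :: nat and X0 :: "'a \<Rightarrow> real"
    and W :: "(nat \<Rightarrow> int) \<times> (nat \<Rightarrow> int) \<Rightarrow> 'a \<Rightarrow> real"
  assumes model: "gaussian_model M d X0 W"
begin

sublocale prob_space M
  using model unfolding gaussian_model_def by auto

definition gauss :: "((nat \<Rightarrow> int) \<times> (nat \<Rightarrow> int)) option \<Rightarrow> 'a \<Rightarrow> real" where
  "gauss k = (case k of None \<Rightarrow> X0 | Some e \<Rightarrow> W e)"

lemma gauss_None [simp]: "gauss None = X0"
  and gauss_Some [simp]: "gauss (Some e) = W e"
  by (simp_all add: gauss_def)

abbreviation sources :: "((nat \<Rightarrow> int) \<times> (nat \<Rightarrow> int)) option set" where
  "sources \<equiv> insert None (Some ` covpairs d)"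

lemma gauss_std_normal: "k \<in> sources \<Longrightarrow> distributed M lborel (gauss k) std_normal_density"
  using model unfolding gaussian_model_def by auto

lemma indep_gauss: "indep_vars (\<lambda>_. borel) gauss sources"
  using model unfolding gaussian_model_def gauss_def by simp

lemma integrable_gauss: "k \<in> sources \<Longrightarrow> integrable M (gauss k)"
  using distributed_integrable_var[OF gauss_std_normal] integrable_std_normal_moment[of 1] by simp

lemma expectation_gauss: "k \<in> sources \<Longrightarrow> expectation (gauss k) = 0"
  using standard_normal_distributed_expectation gauss_std_normal by blast

lemma
  assumes "k \<in> sources" "l \<in> sources"
  shows integrable_gauss_mult: "integrable M (\<lambda>\<omega>. gauss k \<omega> * gauss l \<omega>)"
    and expectation_gauss_mult: "expectation (\<lambda>\<omega>. gauss k \<omega> * gauss l \<omega>) = (if k = l then 1 else 0)"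
  using indep_std_normal_orthonormal[OF indep_gauss gauss_std_normal assms] by auto

end

locale gaussian_broadcast_HS = gaussian_broadcast +
  fixes \<alpha> :: "nat \<Rightarrow> real"
  assumes alpha_pos: "0 < \<alpha> (Suc d)"
begin

abbreviation "a \<equiv> \<alpha> (Suc d)"
abbreviation "b \<equiv> a * real (Suc d)"
abbreviation "X \<equiv> Xr d \<alpha> X0 W"
abbreviation "F \<equiv> noise_kernel d a"

lemma b_pos: "0 < b"
  using alpha_pos by simp

definition second_moments :: "nat \<Rightarrow> bool" where
  "second_moments t \<longleftrightarrow> (\<forall>u\<in>layer d t. integrable M (X t u) \<and> expectation (X t u) = 0 \<and>
    (\<forall>k\<in>sources. integrable M (\<lambda>\<omega>. X t u \<omega> * gauss k \<omega>)) \<and>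
    expectation (\<lambda>\<omega>. X t u \<omega> * X0 \<omega>) = b ^ t \<and>
    (\<forall>e\<in>covpairs d. int t < rank d (snd e) \<longrightarrow> expectation (\<lambda>\<omega>. X t u \<omega> * W e \<omega>) = 0) \<and>
    (\<forall>v\<in>layer d t. integrable M (\<lambda>\<omega>. X t u \<omega> * X t v \<omega>) \<and>
        expectation (\<lambda>\<omega>. X t u \<omega> * X t v \<omega>) = b ^ (2 * t) + F t (u - v)))"

lemma second_momentsD:
  assumes "second_moments t" "u \<in> layer d t"
  shows "integrable M (X t u)" "expectation (X t u) = 0"
    "k \<in> sources \<Longrightarrow> integrable M (\<lambda>\<omega>. X t u \<omega> * gauss k \<omega>)"
    "expectation (\<lambda>\<omega>. X t u \<omega> * X0 \<omega>) = b ^ t"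
    "e \<in> covpairs d \<Longrightarrow> int t < rank d (snd e) \<Longrightarrow> expectation (\<lambda>\<omega>. X t u \<omega> * W e \<omega>) = 0"
    "v \<in> layer d t \<Longrightarrow> integrable M (\<lambda>\<omega>. X t u \<omega> * X t v \<omega>)"
    "v \<in> layer d t \<Longrightarrow> expectation (\<lambda>\<omega>. X t u \<omega> * X t v \<omega>) = b ^ (2 * t) + F t (u - v)"
  using assms unfolding second_moments_def by auto

lemma second_moments_0: "second_moments 0"
proof -
  have src: "None \<in> sources" "e \<in> covpairs d \<Longrightarrow> Some e \<in> sources" for e by simp_all
  show ?thesis
    unfolding second_moments_def
    using integrable_gauss[OF src(1)] expectation_gauss[OF src(1)] integrable_gauss_mult[OF src(1)]
      integrable_gauss_mult[OF src(1) src(1)] expectation_gauss_mult[OF src(1) src(1)] expectation_gauss_mult[OF src(1) src(2)]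
    by auto
qed

context
  fixes t assumes moments: "second_moments t"
begin

lemma parent_moments:
  assumes u: "u \<in> layer d (Suc t)" and i: "i \<le> d"
  shows "integrable M (X t (u - unitv i))" "expectation (X t (u - unitv i)) = 0"
    "k \<in> sources \<Longrightarrow> integrable M (\<lambda>\<omega>. X t (u - unitv i) \<omega> * gauss k \<omega>)"
    "integrable M (\<lambda>\<omega>. X t (u - unitv i) \<omega> * X0 \<omega>)"
    "e \<in> covpairs d \<Longrightarrow> integrable M (\<lambda>\<omega>. X t (u - unitv i) \<omega> * W e \<omega>)"
    "expectation (\<lambda>\<omega>. X t (u - unitv i) \<omega> * X0 \<omega>) = b ^ t"
    "e \<in> covpairs d \<Longrightarrow> int t < rank d (snd e) \<Longrightarrow> expectation (\<lambda>\<omega>. X t (u - unitv i) \<omega> * W e \<omega>) = 0"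
    "v \<in> layer d t \<Longrightarrow> integrable M (\<lambda>\<omega>. X t (u - unitv i) \<omega> * X t v \<omega>)"
    "v \<in> layer d t \<Longrightarrow> expectation (\<lambda>\<omega>. X t (u - unitv i) \<omega> * X t v \<omega>) = b ^ (2 * t) + F t (u - unitv i - v)"
  using second_momentsD[OF moments diff_unitv_in_layer[OF u i]]
    second_momentsD(3)[OF moments diff_unitv_in_layer[OF u i], of None]
    second_momentsD(3)[OF moments diff_unitv_in_layer[OF u i], of "Some e"] by auto

lemma parent_in_sources: "u \<in> layer d (Suc t) \<Longrightarrow> i \<le> d \<Longrightarrow> Some (u - unitv i, u) \<in> sources"
  using parent_in_covpairs by blast

lemma first_moments_Suc:
  assumes u: "u \<in> layer d (Suc t)"
  shows "integrable M (X (Suc t) u)" "expectation (X (Suc t) u) = 0"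
    "k \<in> sources \<Longrightarrow> integrable M (\<lambda>\<omega>. X (Suc t) u \<omega> * gauss k \<omega>)"
proof -
  note W = integrable_gauss[OF parent_in_sources[OF u], simplified]
    expectation_gauss[OF parent_in_sources[OF u], simplified]
  show "integrable M (X (Suc t) u)"
    unfolding Xr_Suc_layer[OF u] by (intro integrable_scaled_sum) (auto simp: parent_moments[OF u] W)
  show "expectation (X (Suc t) u) = 0"
    unfolding Xr_Suc_layer[OF u] by (subst expectation_scaled_sum) (auto simp: parent_moments[OF u] W)
  show "k \<in> sources \<Longrightarrow> integrable M (\<lambda>\<omega>. X (Suc t) u \<omega> * gauss k \<omega>)"
    unfolding Xr_Suc_layer[OF u] using integrable_gauss_mult[OF parent_in_sources[OF u]]
    by (intro integrable_scaled_sum_mult) (auto simp: parent_moments[OF u])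
qed

lemma cov_X0_Suc:
  assumes u: "u \<in> layer d (Suc t)"
  shows "expectation (\<lambda>\<omega>. X (Suc t) u \<omega> * X0 \<omega>) = b ^ Suc t"
proof -
  have "expectation (\<lambda>\<omega>. X (Suc t) u \<omega> * X0 \<omega>) = a * (\<Sum>i\<le>d. b ^ t + 0)"
    unfolding Xr_Suc_layer[OF u]
    using integrable_gauss_mult[OF parent_in_sources[OF u], where l=None]
      expectation_gauss_mult[OF parent_in_sources[OF u], where l=None]
    by (subst expectation_scaled_sum_mult) (auto simp: parent_moments[OF u])
  then show ?thesis by simp
qed

lemma cov_W_Suc:
  assumes u: "u \<in> layer d (Suc t)" and e: "e \<in> covpairs d" "int (Suc t) < rank d (snd e)"
  shows "expectation (\<lambda>\<omega>. X (Suc t) u \<omega> * W e \<omega>) = 0"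
proof -
  have "(u - unitv i, u) \<noteq> e" for i using e u by (auto simp: mem_layer_iff)
  then have "expectation (\<lambda>\<omega>. X (Suc t) u \<omega> * W e \<omega>) = a * (\<Sum>i\<le>d. 0 + 0)"
    unfolding Xr_Suc_layer[OF u]
    using integrable_gauss_mult[OF parent_in_sources[OF u], where l="Some e"]
      expectation_gauss_mult[OF parent_in_sources[OF u], where l="Some e"] e
    by (subst expectation_scaled_sum_mult) (auto simp: parent_moments[OF u])
  then show ?thesis by simp
qed

lemma cov_parent_X_Suc:
  assumes u: "u \<in> layer d (Suc t)" and v: "v \<in> layer d (Suc t)" and i: "i \<le> d"
  shows "integrable M (\<lambda>\<omega>. X t (u - unitv i) \<omega> * X (Suc t) v \<omega>)"
    "expectation (\<lambda>\<omega>. X t (u - unitv i) \<omega> * X (Suc t) v \<omega>) =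
      a * (\<Sum>j\<le>d. b ^ (2 * t) + F t (u - v - unitv i + unitv j))"
proof -
  note pu = parent_moments[OF u i] and v_par = diff_unitv_in_layer[OF v] parent_in_covpairs[OF v]
  have rank_v: "int t < rank d v" using v by (simp add: mem_layer_iff)
  show "integrable M (\<lambda>\<omega>. X t (u - unitv i) \<omega> * X (Suc t) v \<omega>)"
    unfolding Xr_Suc_layer[OF v] using v_par by (intro integrable_mult_scaled_sum) (auto simp: pu)
  have "expectation (\<lambda>\<omega>. X t (u - unitv i) \<omega> * X (Suc t) v \<omega>) =
      a * (\<Sum>j\<le>d. (b ^ (2 * t) + F t (u - unitv i - (v - unitv j))) + 0)"
    unfolding Xr_Suc_layer[OF v] using v_par rank_v
    by (subst expectation_mult_scaled_sum) (auto simp: pu)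
  then show "expectation (\<lambda>\<omega>. X t (u - unitv i) \<omega> * X (Suc t) v \<omega>) =
      a * (\<Sum>j\<le>d. b ^ (2 * t) + F t (u - v - unitv i + unitv j))"
    by (simp add: algebra_simps)
qed

lemma cov_parent_W_Suc:
  assumes u: "u \<in> layer d (Suc t)" and v: "v \<in> layer d (Suc t)" and i: "i \<le> d"
  shows "integrable M (\<lambda>\<omega>. W (u - unitv i, u) \<omega> * X (Suc t) v \<omega>)"
    "expectation (\<lambda>\<omega>. W (u - unitv i, u) \<omega> * X (Suc t) v \<omega>) =
      a * (\<Sum>j\<le>d. if i = j \<and> u = v then 1 else 0)"
proof -
  have rank_u: "int t < rank d u" using u by (simp add: mem_layer_iff)
  have W_X: "j \<le> d \<Longrightarrow> integrable M (\<lambda>\<omega>. W (u - unitv i, u) \<omega> * X t (v - unitv j) \<omega>)"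
    "j \<le> d \<Longrightarrow> expectation (\<lambda>\<omega>. W (u - unitv i, u) \<omega> * X t (v - unitv j) \<omega>) = 0" for j
    using parent_moments(5,7)[OF v, where i=j and e="(u - unitv i, u)"] parent_in_covpairs[OF u i] rank_u
    by (simp_all add: mult.commute)
  have same_edge: "(u - unitv i, u) = (v - unitv j, v) \<longleftrightarrow> i = j \<and> u = v" for j
    by (auto simp: unitv_eq_iff)
  note W_W = integrable_gauss_mult[OF parent_in_sources[OF u i] parent_in_sources[OF v]]
    expectation_gauss_mult[OF parent_in_sources[OF u i] parent_in_sources[OF v]]
  show "integrable M (\<lambda>\<omega>. W (u - unitv i, u) \<omega> * X (Suc t) v \<omega>)"
    unfolding Xr_Suc_layer[OF v] using W_X W_W by (intro integrable_mult_scaled_sum) auto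
  show "expectation (\<lambda>\<omega>. W (u - unitv i, u) \<omega> * X (Suc t) v \<omega>) =
      a * (\<Sum>j\<le>d. if i = j \<and> u = v then 1 else 0)"
    unfolding Xr_Suc_layer[OF v] using W_X W_W same_edge
    by (subst expectation_mult_scaled_sum) auto
qed

lemma cov_X_Suc:
  assumes u: "u \<in> layer d (Suc t)" and v: "v \<in> layer d (Suc t)"
  shows "integrable M (\<lambda>\<omega>. X (Suc t) u \<omega> * X (Suc t) v \<omega>)"
    "expectation (\<lambda>\<omega>. X (Suc t) u \<omega> * X (Suc t) v \<omega>) = b ^ (2 * Suc t) + F (Suc t) (u - v)"
proof -
  note rows = cov_parent_X_Suc[OF u v] cov_parent_W_Suc[OF u v]
  have delta: "i \<le> d \<Longrightarrow> (\<Sum>j\<le>d. if i = j \<and> u = v then 1 else 0) = (if u = v then 1 else (0::real))" for i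
    by (cases "u = v") simp_all
  show "integrable M (\<lambda>\<omega>. X (Suc t) u \<omega> * X (Suc t) v \<omega>)"
    unfolding Xr_Suc_layer[OF u] by (intro integrable_scaled_sum_mult) (auto simp del: Xr.simps simp: rows)
  have "expectation (\<lambda>\<omega>. X (Suc t) u \<omega> * X (Suc t) v \<omega>) = a * (\<Sum>i\<le>d.
      a * (\<Sum>j\<le>d. b ^ (2 * t) + F t (u - v - unitv i + unitv j)) + a * (\<Sum>j\<le>d. if i = j \<and> u = v then 1 else 0))"
    unfolding Xr_Suc_layer[OF u] by (subst expectation_scaled_sum_mult) (auto simp del: Xr.simps simp: rows)
  also have "\<dots> = a\<^sup>2 * (real (Suc d) * real (Suc d) * b ^ (2 * t)
      + (\<Sum>i\<le>d. \<Sum>j\<le>d. F t (u - v - unitv i + unitv j)) + real (Suc d) * (if u = v then 1 else 0))"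
    by (simp add: delta sum.distrib sum_distrib_left power2_eq_square algebra_simps)
  also have "\<dots> = b ^ (2 * Suc t) + F (Suc t) (u - v)"
    by (simp add: power2_eq_square algebra_simps power_mult)
  finally show "expectation (\<lambda>\<omega>. X (Suc t) u \<omega> * X (Suc t) v \<omega>) = b ^ (2 * Suc t) + F (Suc t) (u - v)" .
qed

lemma second_moments_Suc: "second_moments (Suc t)"
  unfolding second_moments_def
  using first_moments_Suc cov_X0_Suc cov_W_Suc cov_X_Suc by auto

end

lemma second_moments: "second_moments t"
  by (induction t) (auto intro: second_moments_0 second_moments_Suc)

section \<open>The noise kernel as a covariance\<close>

lemma
  assumes u: "u \<in> layer d t" and v: "v \<in> layer d t"
  shows integrable_noise_mult: "integrable M (\<lambda>\<omega>. (X t u \<omega> - b ^ t * X0 \<omega>) * (X t v \<omega> - b ^ t * X0 \<omega>))"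
    and expectation_noise_mult:
      "expectation (\<lambda>\<omega>. (X t u \<omega> - b ^ t * X0 \<omega>) * (X t v \<omega> - b ^ t * X0 \<omega>)) = F t (u - v)"
proof -
  have eq: "(\<lambda>\<omega>. (X t u \<omega> - b ^ t * X0 \<omega>) * (X t v \<omega> - b ^ t * X0 \<omega>)) =
     (\<lambda>\<omega>. X t u \<omega> * X t v \<omega> - b ^ t * (X t u \<omega> * X0 \<omega>) - b ^ t * (X t v \<omega> * X0 \<omega>)
        + b ^ t * b ^ t * (X0 \<omega> * X0 \<omega>))"
    by (simp add: algebra_simps)
  have "None \<in> sources" by simp
  note facts = second_momentsD[OF second_moments u] second_momentsD[OF second_moments v]
    second_momentsD(3)[OF second_moments u this] second_momentsD(3)[OF second_moments v this]
    integrable_gauss_mult[OF this this, simplified] expectation_gauss_mult[OF this this, simplified]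
  show "integrable M (\<lambda>\<omega>. (X t u \<omega> - b ^ t * X0 \<omega>) * (X t v \<omega> - b ^ t * X0 \<omega>))"
    unfolding eq using facts v by (intro Bochner_Integration.integrable_add Bochner_Integration.integrable_diff
        Bochner_Integration.integrable_mult_right) auto
  show "expectation (\<lambda>\<omega>. (X t u \<omega> - b ^ t * X0 \<omega>) * (X t v \<omega> - b ^ t * X0 \<omega>)) = F t (u - v)"
    unfolding eq using facts v
    by (simp add: integrable_add integrable_diff power_mult power2_eq_square power_mult_distrib)
qed

text \<open>F t is the covariance kernel of the noise parts, hence positive semidefinite.\<close>
lemma noise_kernel_psd:
  fixes \<pi> :: "'i \<Rightarrow> nat \<Rightarrow> int"
  assumes "finite J" "\<And>j. j \<in> J \<Longrightarrow> \<pi> j \<in> zero_sum d"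
  shows "0 \<le> (\<Sum>j\<in>J. \<Sum>j'\<in>J. c j * c j' * F t (\<pi> j - \<pi> j'))"
proof -
  define p where "p j = \<pi> j + axis_point t" for j
  have p: "j \<in> J \<Longrightarrow> p j \<in> layer d t" for j
    using zero_sum_add_layer[OF assms(2) axis_point_in_layer] p_def by auto
  define Y where "Y j \<omega> = X t (p j) \<omega> - b ^ t * X0 \<omega>" for j \<omega>
  have "0 \<le> (\<Sum>j\<in>J. \<Sum>j'\<in>J. c j * c j' * expectation (\<lambda>\<omega>. Y j \<omega> * Y j' \<omega>))"
    using assms(1) integrable_noise_mult[OF p p] unfolding Y_def by (intro gram_nonneg) auto
  also have "\<dots> = (\<Sum>j\<in>J. \<Sum>j'\<in>J. c j * c j' * F t (\<pi> j - \<pi> j'))"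
    using expectation_noise_mult[OF p p] unfolding Y_def p_def by (intro sum.cong) auto
  finally show ?thesis .
qed

lemma noise_kernel_uminus:
  assumes "x \<in> zero_sum d" shows "F t (- x) = F t x"
proof -
  have u: "x + axis_point t \<in> layer d t" by (rule zero_sum_add_layer[OF assms axis_point_in_layer])
  show ?thesis
    using expectation_noise_mult[OF u axis_point_in_layer] expectation_noise_mult[OF axis_point_in_layer u]
    by (simp add: mult.commute)
qed

lemma noise_kernel_zero_nonneg: "0 \<le> F t 0"
  using noise_kernel_psd[where J="{0::nat}" and \<pi>="\<lambda>_. 0" and c="\<lambda>_. 1" and t=t] zero_in_zero_sum
  by simp

lemma noise_kernel_le_zero:
  assumes "x \<in> zero_sum d" shows "F t x \<le> F t 0"
proof -
  have "0 \<le> 2 * F t 0 + (- F t (- x) - F t x)"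
    using noise_kernel_psd[where J="{0::nat, 1}" and \<pi>="\<lambda>j. if j = 0 then 0 else x"
        and c="\<lambda>j. if j = 0 then 1 else -1" and t=t] zero_in_zero_sum assms
    by simp
  then show ?thesis using noise_kernel_uminus[OF assms] by simp
qed

text \<open>Positive semidefiniteness on the points y + s, s, 0 with weights 1, -2, 1.\<close>
lemma noise_kernel_defect_add:
  assumes y: "y \<in> zero_sum d" and s: "s \<in> zero_sum d"
  shows "F t 0 - F t (y + s) \<le> 2 * (F t 0 - F t y) + 2 * (F t 0 - F t s)"
proof -
  define \<pi> where "\<pi> j = (if j = (0::nat) then y + s else if j = 1 then s else 0)" for j
  define c where "c j = (if j = (0::nat) then 1 else if j = 1 then -2 else (1::real))" for j
  have "0 \<le> (\<Sum>j\<in>{0::nat, 1, 2}. \<Sum>j'\<in>{0, 1, 2}. c j * c j' * F t (\<pi> j - \<pi> j'))"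
    using zero_in_zero_sum y s zero_sum_add[OF y s] by (intro noise_kernel_psd) (auto simp: \<pi>_def)
  also have "\<dots> = 6 * F t 0 - 2 * (F t y + F t (- y)) + (F t (y + s) + F t (- (y + s)))
      - 2 * (F t s + F t (- s))"
    by (simp add: \<pi>_def c_def algebra_simps)
  finally show ?thesis
    using noise_kernel_uminus[OF y] noise_kernel_uminus[OF s] noise_kernel_uminus[OF zero_sum_add[OF y s]]
    by simp
qed

text \<open>The diagonal term of the recursion comes from the fresh edge noise; the remaining term is F t
  evaluated on the shifted points u - e i, hence nonnegative.\<close>
lemma kernel_form_Suc_ge:
  assumes A: "finite A" "A \<subseteq> layer d s"
  shows "a\<^sup>2 * real (Suc d) * (\<Sum>u\<in>A. (c u)\<^sup>2) \<le> kernel_form d a (Suc t) A c"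
proof -
  define \<pi> where "\<pi> p = (case p of (i, u) \<Rightarrow> u - unitv i + unitv 0 - axis_point s)" for p :: "nat \<times> (nat \<Rightarrow> int)"
  define c' where "c' p = (case p of (i, u) \<Rightarrow> c u)" for p :: "nat \<times> (nat \<Rightarrow> int)"
  have \<pi>: "\<pi> p \<in> zero_sum d" if p: "p \<in> {..d} \<times> A" for p
  proof -
    obtain i u where iu: "p = (i, u)" "i \<le> d" "u \<in> layer d s" using p A by auto
    show ?thesis
      using iu axis_point_in_layer[of s d] unfolding zero_sum_def \<pi>_def mem_layer_iff
      by (auto simp: rank_add rank_diff rank_unitv) (auto simp: unitv_def axis_point_def)
  qed
  have "0 \<le> (\<Sum>p\<in>{..d} \<times> A. \<Sum>p'\<in>{..d} \<times> A. c' p * c' p' * F t (\<pi> p - \<pi> p'))"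
    using A(1) \<pi> by (intro noise_kernel_psd) auto
  also have "\<dots> = (\<Sum>i\<le>d. \<Sum>u\<in>A. \<Sum>j\<le>d. \<Sum>v\<in>A. c u * c v * F t (u - v - unitv i + unitv j))"
    unfolding sum.cartesian_product' by (simp add: c'_def \<pi>_def algebra_simps)
  also have "\<dots> = (\<Sum>u\<in>A. \<Sum>i\<le>d. \<Sum>v\<in>A. \<Sum>j\<le>d. c u * c v * F t (u - v - unitv i + unitv j))"
    by (subst sum.swap) (simp add: sum.swap[of _ "{..d}" A])
  also have "\<dots> = (\<Sum>u\<in>A. \<Sum>v\<in>A. c u * c v * (\<Sum>i\<le>d. \<Sum>j\<le>d. F t (u - v - unitv i + unitv j)))"
    by (simp add: sum_distrib_left sum.swap[of _ "{..d}" A])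
  finally have recurrent: "0 \<le> \<dots>" .
  have "kernel_form d a (Suc t) A c =
      a\<^sup>2 * (\<Sum>u\<in>A. \<Sum>v\<in>A. c u * c v * (\<Sum>i\<le>d. \<Sum>j\<le>d. F t (u - v - unitv i + unitv j)))
      + a\<^sup>2 * real (Suc d) * (\<Sum>u\<in>A. \<Sum>v\<in>A. c u * c v * (if u = v then 1 else 0))"
    unfolding kernel_form_def by (simp add: sum_distrib_left sum.distrib algebra_simps)
  also have "(\<Sum>u\<in>A. \<Sum>v\<in>A. c u * c v * (if u = v then 1 else 0)) = (\<Sum>u\<in>A. (c u)\<^sup>2)"
    using A(1) by (simp add: power2_eq_square if_distrib cong: if_cong)
  finally show ?thesis using mult_nonneg_nonneg[OF zero_le_power2[of a] recurrent] by linarith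
qed

text \<open>Positive semidefiniteness on A together with v0, carrying the optimal weight at v0.\<close>
lemma kernel_form_cauchy_schwarz:
  assumes A: "finite A" "A \<subseteq> layer d t" "v0 \<in> A" and F0: "0 < F t 0"
  shows "(\<Sum>u\<in>A. c u * F t (u - v0))\<^sup>2 \<le> kernel_form d a t A c * F t 0"
proof -
  define B where "B = (\<Sum>u\<in>A. c u * F t (u - v0))"
  define \<mu> where "\<mu> = B / F t 0"
  define \<pi> where "\<pi> j = (case j of None \<Rightarrow> v0 - axis_point t | Some u \<Rightarrow> u - axis_point t)" for j
  define c' where "c' j = (case j of None \<Rightarrow> - \<mu> | Some u \<Rightarrow> c u)" for j
  have sym: "(\<Sum>u\<in>A. c u * F t (v0 - u)) = B"
    unfolding B_def using noise_kernel_uminus[OF layer_diff_in_zero_sum, of _ t v0] A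
    by (intro sum.cong) auto
  have "0 \<le> (\<Sum>j\<in>insert None (Some ` A). \<Sum>j'\<in>insert None (Some ` A). c' j * c' j' * F t (\<pi> j - \<pi> j'))"
    using A layer_diff_in_zero_sum[OF _ axis_point_in_layer] by (intro noise_kernel_psd) (auto simp: \<pi>_def)
  also have "\<dots> = \<mu>\<^sup>2 * F t 0 - \<mu> * (\<Sum>u\<in>A. c u * F t (v0 - u)) - \<mu> * B + kernel_form d a t A c"
    using A(1) unfolding kernel_form_def B_def
    by (simp add: sum.reindex c'_def \<pi>_def sum.distrib sum_distrib_left algebra_simps power2_eq_square
        sum_subtractf sum_negf)
  also have "\<dots> = - B\<^sup>2 / F t 0 + kernel_form d a t A c"
    using F0 by (simp add: sym \<mu>_def field_simps power2_eq_square)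
  finally show ?thesis unfolding B_def[symmetric] using F0 by (simp add: field_simps)
qed

lemma noise_kernel_Suc_zero:
  "F (Suc t) 0 = a\<^sup>2 * ((\<Sum>i\<le>d. \<Sum>j\<le>d. F t (unitv j - unitv i)) + real (Suc d))"
  by (simp add: algebra_simps)

text \<open>For b = 1 the recursion at 0 reads (d + 1)^2 F (t + 1) 0 = \<Sum>i j. F t (e j - e i) + d + 1. Since
  F t 0 \<le> F (t + 1) 0, the nonnegative defects F t 0 - F t (e j - e i) sum to at most d + 1.\<close>
lemma noise_kernel_defect_unitv_critical:
  assumes b: "b = 1" and ij: "i \<le> d" "j \<le> d"
  shows "F t 0 - F t (unitv j - unitv i) \<le> real (Suc d)"
proof -
  define n where "n = real (Suc d)"
  define D where "D i j = F t 0 - F t (unitv j - unitv i)" for i j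
  have D_nonneg: "i \<le> d \<Longrightarrow> j \<le> d \<Longrightarrow> 0 \<le> D i j" for i j
    unfolding D_def using noise_kernel_le_zero[OF unitv_diff_in_zero_sum] by simp
  have "n\<^sup>2 * F (Suc t) 0 = (\<Sum>i\<le>d. \<Sum>j\<le>d. F t (unitv j - unitv i)) + n"
    using b unfolding noise_kernel_Suc_zero n_def[symmetric]
    by (simp add: power_mult_distrib[symmetric] algebra_simps)
  moreover have "(\<Sum>i\<le>d. \<Sum>j\<le>d. D i j) = n\<^sup>2 * F t 0 - (\<Sum>i\<le>d. \<Sum>j\<le>d. F t (unitv j - unitv i))"
    unfolding D_def n_def by (simp add: sum_subtractf power2_eq_square)
  moreover have "n\<^sup>2 * F t 0 \<le> n\<^sup>2 * F (Suc t) 0"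
    by (rule mult_left_mono[OF noise_kernel_mono]) simp
  ultimately have "(\<Sum>i\<le>d. \<Sum>j\<le>d. D i j) \<le> n" by linarith
  moreover have "D i j \<le> (\<Sum>i\<le>d. \<Sum>j\<le>d. D i j)"
    using ij D_nonneg
    by (intro order.trans[OF member_le_sum[of j] member_le_sum[of i]] sum_nonneg) auto
  ultimately show ?thesis unfolding D_def n_def by simp
qed

lemma noise_kernel_defect_l1:
  assumes B: "0 \<le> B" and step: "\<And>i j. i \<le> d \<Longrightarrow> j \<le> d \<Longrightarrow> F t 0 - F t (unitv i - unitv j) \<le> B"
  shows "x \<in> zero_sum d \<Longrightarrow> F t 0 - F t x \<le> 4 ^ nat (l1_norm d x) * B"
proof (induction "nat (l1_norm d x)" arbitrary: x rule: less_induct)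
  case less
  note x = less.prems
  show ?case
  proof (cases "x = 0")
    case True then show ?thesis using B by simp
  next
    case False
    obtain i j where i: "i \<le> d" and j: "j \<le> d"
      and shorter: "l1_norm d (x - (unitv i - unitv j)) < l1_norm d x"
      using l1_norm_diff_unitv_less[OF x False] by blast
    define s where "s = unitv i - unitv j"
    define y where "y = x - s"
    have s: "s \<in> zero_sum d" unfolding s_def using unitv_diff_in_zero_sum i j by auto
    have y: "y \<in> zero_sum d" unfolding y_def using zero_sum_diff[OF x s] .
    have "0 \<le> l1_norm d y" unfolding l1_norm_def by (simp add: sum_nonneg)
    then have less_norm: "nat (l1_norm d y) < nat (l1_norm d x)"
      using shorter by (simp add: y_def s_def)
    have "F t 0 - F t x \<le> 2 * (F t 0 - F t y) + 2 * (F t 0 - F t s)"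
      using noise_kernel_defect_add[OF y s] by (simp add: y_def)
    also have "\<dots> \<le> 2 * (4 ^ nat (l1_norm d y) * B) + 2 * B"
      using less.hyps[OF less_norm y] step[OF i(1) j(1)] by (simp add: s_def)
    also have "\<dots> \<le> 4 * (4 ^ (nat (l1_norm d x) - 1) * B)"
    proof -
      have "(4::real) ^ nat (l1_norm d y) \<le> 4 ^ (nat (l1_norm d x) - 1)"
        using less_norm by (intro power_increasing) auto
      then have "4 ^ nat (l1_norm d y) * B \<le> 4 ^ (nat (l1_norm d x) - 1) * B"
        by (rule mult_right_mono[OF _ B])
      moreover have "1 * B \<le> 4 ^ (nat (l1_norm d x) - 1) * B"
        by (rule mult_right_mono[OF _ B]) simp
      ultimately show ?thesis by linarith
    qed
    also have "\<dots> = 4 ^ nat (l1_norm d x) * B"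
      using less_norm by (cases "nat (l1_norm d x)") auto
    finally show ?thesis .
  qed
qed

lemma noise_kernel_zero_le_supercritical:
  assumes b: "1 < b"
  defines "K \<equiv> a\<^sup>2 * real (Suc d) / (b\<^sup>2 - 1)"
  shows "F t 0 \<le> K * (b ^ (2 * t) - 1)"
proof (induction t)
  case (Suc t)
  have b2: "1 < b\<^sup>2" using one_less_power[OF b, of 2] by simp
  have "(\<Sum>i\<le>d. \<Sum>j\<le>d. F t (unitv j - unitv i)) \<le> (\<Sum>i\<le>d. \<Sum>j\<le>d. F t 0)"
    using noise_kernel_le_zero[OF unitv_diff_in_zero_sum] by (intro sum_mono) auto
  then have "F (Suc t) 0 \<le> a\<^sup>2 * (real (Suc d) ^ 2 * F t 0 + real (Suc d))"
    unfolding noise_kernel_Suc_zero by (intro mult_left_mono) (auto simp: power2_eq_square)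
  also have "\<dots> \<le> a\<^sup>2 * (real (Suc d) ^ 2 * (K * (b ^ (2 * t) - 1)) + real (Suc d))"
  proof -
    have "real (Suc d) ^ 2 * F t 0 \<le> real (Suc d) ^ 2 * (K * (b ^ (2 * t) - 1))"
      by (rule mult_left_mono[OF Suc.IH]) simp
    then show ?thesis by (intro mult_left_mono add_right_mono) simp_all
  qed
  also have "\<dots> = b\<^sup>2 * K * b ^ (2 * t) - K * b\<^sup>2 + a\<^sup>2 * real (Suc d)"
    by (simp only: power_mult_distrib distrib_left right_diff_distrib mult_ac)
  also have "\<dots> = K * (b ^ (2 * Suc t) - 1)"
  proof -
    have "K * (b\<^sup>2 - 1) = a\<^sup>2 * real (Suc d)" using b2 by (simp add: K_def)
    moreover have "b ^ (2 * Suc t) = b\<^sup>2 * b ^ (2 * t)" by (simp add: power2_eq_square mult.assoc)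
    ultimately show ?thesis by (simp only: flip: \<open>K * (b\<^sup>2 - 1) = a\<^sup>2 * real (Suc d)\<close>) (simp add: algebra_simps)
  qed
  finally show ?case .
qed simp

section \<open>Correlation of layer estimators\<close>

lemma var_X0: "var M X0 = 1"
  using expectation_gauss[of None] expectation_gauss_mult[of None None]
  by (simp add: var_def power2_eq_square)

lemma
  fixes c :: "(nat \<Rightarrow> int) \<Rightarrow> real"
  assumes A: "finite A" "A \<subseteq> layer d t"
  shows var_layer_sum: "var M (\<lambda>\<omega>. \<Sum>u\<in>A. c u * X t u \<omega>) = b ^ (2 * t) * (sum c A)\<^sup>2 + kernel_form d a t A c"
    and cov_layer_sum_X0: "cov M (\<lambda>\<omega>. \<Sum>u\<in>A. c u * X t u \<omega>) X0 = b ^ t * sum c A"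
proof -
  note moments = second_momentsD[OF second_moments subsetD[OF A(2)]]
  have mean: "expectation (\<lambda>\<omega>. \<Sum>u\<in>A. c u * X t u \<omega>) = 0"
    using moments(1,2) by (simp add: Bochner_Integration.integral_sum)
  have "var M (\<lambda>\<omega>. \<Sum>u\<in>A. c u * X t u \<omega>) =
      (\<Sum>u\<in>A. \<Sum>v\<in>A. c u * c v * expectation (\<lambda>\<omega>. X t u \<omega> * X t v \<omega>))"
    unfolding var_def mean using A moments(6) by (simp add: expectation_square_sum subset_iff)
  also have "\<dots> = (\<Sum>u\<in>A. \<Sum>v\<in>A. c u * c v * (b ^ (2 * t) + F t (u - v)))"
    using A moments(7) by (intro sum.cong refl) auto
  also have "\<dots> = b ^ (2 * t) * (sum c A)\<^sup>2 + kernel_form d a t A c"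
    unfolding kernel_form_def
    by (simp add: power2_eq_square sum_product algebra_simps sum.distrib sum_distrib_left sum_distrib_right)
  finally show "var M (\<lambda>\<omega>. \<Sum>u\<in>A. c u * X t u \<omega>) = b ^ (2 * t) * (sum c A)\<^sup>2 + kernel_form d a t A c" .
  have "cov M (\<lambda>\<omega>. \<Sum>u\<in>A. c u * X t u \<omega>) X0 = expectation (\<lambda>\<omega>. \<Sum>u\<in>A. c u * (X t u \<omega> * X0 \<omega>))"
    unfolding cov_def mean expectation_gauss[of None, simplified] by (simp add: sum_distrib_right mult.assoc)
  also have "\<dots> = b ^ t * sum c A"
    using A moments(4) second_momentsD(3)[OF second_moments subsetD[OF A(2)], where k=None]
    by (simp add: Bochner_Integration.integral_sum sum_distrib_right mult.commute)
  finally show "cov M (\<lambda>\<omega>. \<Sum>u\<in>A. c u * X t u \<omega>) X0 = b ^ t * sum c A" .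
qed

lemma
  assumes fin: "finite {u \<in> layer d t. c u \<noteq> 0}"
  defines "A \<equiv> {u \<in> layer d t. c u \<noteq> 0}"
  shows var_zeta: "var M (zeta d \<alpha> X0 W c t) = b ^ (2 * t) * (sum c A)\<^sup>2 + kernel_form d a t A c"
    and corr_zeta: "corr M (zeta d \<alpha> X0 W c t) X0 =
      b ^ t * sum c A / sqrt (b ^ (2 * t) * (sum c A)\<^sup>2 + kernel_form d a t A c)"
proof -
  have "zeta d \<alpha> X0 W c t = (\<lambda>\<omega>. \<Sum>u\<in>A. c u * X t u \<omega>)"
    unfolding zeta_def A_def by (intro ext sum.cong) (auto simp: Xv_layer)
  then show "var M (zeta d \<alpha> X0 W c t) = b ^ (2 * t) * (sum c A)\<^sup>2 + kernel_form d a t A c"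
    "corr M (zeta d \<alpha> X0 W c t) X0 =
      b ^ t * sum c A / sqrt (b ^ (2 * t) * (sum c A)\<^sup>2 + kernel_form d a t A c)"
    using var_layer_sum[of A t c] cov_layer_sum_X0[of A t c] var_X0 fin
    unfolding corr_def A_def by auto
qed

lemma
  shows var_zeta_axis_weights: "var M (zeta d \<alpha> X0 W axis_weights t) = b ^ (2 * t) + F t 0"
    and corr_zeta_axis_weights: "corr M (zeta d \<alpha> X0 W axis_weights t) X0 = b ^ t / sqrt (b ^ (2 * t) + F t 0)"
  using var_zeta[of t axis_weights] corr_zeta[of t axis_weights]
  unfolding axis_weights_support by (simp_all add: kernel_form_def axis_weights_def)

lemma single_vertex_reconstructionI:
  assumes "\<not> (\<lambda>t. b ^ t / sqrt (b ^ (2 * t) + F t 0)) \<longlonglongrightarrow> 0"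
  shows "single_vertex_reconstruction M d \<alpha> X0 W"
  unfolding single_vertex_reconstruction_def recon_width_def
proof (intro exI conjI allI ballI impI)
  show "u \<in> window d (axis_point t) 1" if "u \<in> layer d t" "axis_weights u \<noteq> 0" for t u
  proof -
    have "u = axis_point t" using that axis_weights_support[of d t] by blast
    then show ?thesis using axis_point_in_layer[of t d] by (simp add: window_def layer_def)
  qed
  show "0 < var M (zeta d \<alpha> X0 W axis_weights t)" for t
    using b_pos noise_kernel_zero_nonneg[of t] by (simp add: var_zeta_axis_weights add_pos_nonneg)
  show "\<not> (\<lambda>t. corr M (zeta d \<alpha> X0 W axis_weights t) X0) \<longlonglongrightarrow> 0"
    using assms by (simp add: corr_zeta_axis_weights)
qed

lemma noise_kernel_dominates_if_no_single_vertex: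
  assumes no_single: "\<not> single_vertex_reconstruction M d \<alpha> X0 W" and K: "0 \<le> K"
  shows "\<exists>T. \<forall>t\<ge>T. K * b ^ (2 * t) < F t 0"
proof -
  have pos: "0 < b ^ (2 * t) + F t 0" for t using b_pos noise_kernel_zero_nonneg[of t] by (simp add: add_pos_nonneg)
  have "(\<lambda>t. b ^ t / sqrt (b ^ (2 * t) + F t 0)) \<longlonglongrightarrow> 0"
    using no_single single_vertex_reconstructionI by blast
  then have "eventually (\<lambda>t. b ^ t / sqrt (b ^ (2 * t) + F t 0) < 1 / sqrt (1 + K)) sequentially"
    by (rule order_tendstoD(2)) (use K in simp)
  then obtain T where T: "\<And>t. T \<le> t \<Longrightarrow> b ^ t / sqrt (b ^ (2 * t) + F t 0) < 1 / sqrt (1 + K)"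
    unfolding eventually_sequentially by auto
  have "K * b ^ (2 * t) < F t 0" if t: "T \<le> t" for t
  proof -
    have "(b ^ t / sqrt (b ^ (2 * t) + F t 0))\<^sup>2 < (1 / sqrt (1 + K))\<^sup>2"
      using T[OF t] b_pos pos[of t] by (intro power_strict_mono) auto
    then have "b ^ (2 * t) / (b ^ (2 * t) + F t 0) < 1 / (1 + K)"
      using pos[of t] K by (simp add: power_divide power_mult[symmetric] mult.commute)
    then show ?thesis using pos[of t] K by (simp add: field_simps)
  qed
  then show ?thesis by blast
qed

section \<open>The three regimes\<close>

lemma single_vertex_reconstruction_supercritical:
  assumes b: "1 < b" shows "single_vertex_reconstruction M d \<alpha> X0 W"
proof (rule ccontr)
  define K where "K = a\<^sup>2 * real (Suc d) / (b\<^sup>2 - 1)"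
  have "0 \<le> K" using one_less_power[OF b, of 2] by (simp add: K_def)
  moreover assume "\<not> single_vertex_reconstruction M d \<alpha> X0 W"
  ultimately obtain T where "K * b ^ (2 * T) < F T 0"
    using noise_kernel_dominates_if_no_single_vertex by blast
  moreover have "F T 0 \<le> K * (b ^ (2 * T) - 1)"
    unfolding K_def by (rule noise_kernel_zero_le_supercritical[OF b])
  ultimately show False using \<open>0 \<le> K\<close> by (simp add: algebra_simps)
qed

lemma often_correlated_weights:
  assumes "local_reconstruction M d \<alpha> X0 W"
  obtains e and A :: "nat \<Rightarrow> (nat \<Rightarrow> int) set" and y :: "nat \<Rightarrow> nat \<Rightarrow> int" and N c
  where "0 < e" "\<And>t. finite (A t)" "\<And>t. A t \<subseteq> layer d t" "\<And>t. A t \<subseteq> window d (y t) N"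
    "\<And>t. card (A t) \<le> N ^ Suc d"
    "\<And>T. \<exists>t\<ge>T. sum c (A t) \<noteq> 0 \<and> e\<^sup>2 * kernel_form d a t (A t) c \<le> b ^ (2 * t) * (sum c (A t))\<^sup>2"
proof -
  obtain N y c where
    win: "\<And>t. \<forall>u\<in>layer d t. c u \<noteq> 0 \<longrightarrow> u \<in> window d (y t) N" and
    var_pos: "\<And>t. 0 < var M (zeta d \<alpha> X0 W c t)" and
    not_lim: "\<not> (\<lambda>t. corr M (zeta d \<alpha> X0 W c t) X0) \<longlonglongrightarrow> 0"
    using assms unfolding local_reconstruction_def recon_width_def by blast
  define A where "A t = {u \<in> layer d t. c u \<noteq> 0}" for t
  have A_window: "A t \<subseteq> window d (y t) N" for t using win unfolding A_def by blast
  have A_finite: "finite (A t)" for t by (rule finite_subset[OF A_window finite_window])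
  have A_card: "card (A t) \<le> N ^ Suc d" for t
    by (rule order.trans[OF card_mono[OF finite_window A_window] card_window_le])
  obtain e where e: "0 < e" "\<And>T. \<exists>t\<ge>T. e \<le> \<bar>corr M (zeta d \<alpha> X0 W c t) X0\<bar>"
    using not_lim unfolding LIMSEQ_iff by (auto simp: not_less)
  have often_ge: "sum c (A t) \<noteq> 0 \<and> e\<^sup>2 * kernel_form d a t (A t) c \<le> b ^ (2 * t) * (sum c (A t))\<^sup>2"
    if corr_ge: "e \<le> \<bar>corr M (zeta d \<alpha> X0 W c t) X0\<bar>" for t
  proof -
    have var: "var M (zeta d \<alpha> X0 W c t) = (b ^ t)\<^sup>2 * (sum c (A t))\<^sup>2 + kernel_form d a t (A t) c"
      using var_zeta[OF A_finite[unfolded A_def]] unfolding A_def by (simp add: power_mult[symmetric] mult.commute)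
    have "e \<le> \<bar>b ^ t * sum c (A t) / sqrt (var M (zeta d \<alpha> X0 W c t))\<bar>"
      using corr_ge corr_zeta[OF A_finite[unfolded A_def]] var_zeta[OF A_finite[unfolded A_def]]
      unfolding A_def by simp
    then show ?thesis
      using corr_lower_bound[OF var_pos var e(1)] by (simp add: power_mult[symmetric] mult.commute)
  qed
  have A_layer: "A t \<subseteq> layer d t" for t unfolding A_def by blast
  show ?thesis
    using e(2) often_ge by (intro that[OF e(1) A_finite A_layer A_window A_card]) blast
qed

lemma fresh_noise_bound:
  assumes A: "finite A" "A \<subseteq> layer d (Suc t)" "card A \<le> n" and S: "sum c A \<noteq> 0"
    and e: "e\<^sup>2 * kernel_form d a (Suc t) A c \<le> b ^ (2 * Suc t) * (sum c A)\<^sup>2"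
  shows "e\<^sup>2 * (a\<^sup>2 * real (Suc d)) \<le> real n * b ^ (2 * Suc t)"
proof -
  have "(sum c A)\<^sup>2 \<le> (\<Sum>u\<in>A. (c u)\<^sup>2) * card A" by (rule sum_squared_le_sum_of_squares)
  also have "\<dots> \<le> (\<Sum>u\<in>A. (c u)\<^sup>2) * n" using A by (intro mult_left_mono) (auto intro: sum_nonneg)
  finally have "a\<^sup>2 * real (Suc d) * (sum c A)\<^sup>2 \<le> a\<^sup>2 * real (Suc d) * ((\<Sum>u\<in>A. (c u)\<^sup>2) * n)"
    by (rule mult_left_mono) simp
  also have "\<dots> \<le> n * kernel_form d a (Suc t) A c"
    using mult_left_mono[OF kernel_form_Suc_ge[OF A(1,2)], of "real n"] by (simp add: mult_ac)
  finally have "e\<^sup>2 * (a\<^sup>2 * real (Suc d)) * (sum c A)\<^sup>2 \<le> e\<^sup>2 * (n * kernel_form d a (Suc t) A c)"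
    by (simp add: mult_left_mono mult.assoc)
  also have "\<dots> \<le> n * b ^ (2 * Suc t) * (sum c A)\<^sup>2"
    using mult_left_mono[OF e, of "real n"] by (simp add: mult_ac)
  finally show ?thesis using S by (simp add: mult_le_cancel_right)
qed

lemma no_local_reconstruction_subcritical:
  assumes b: "b < 1" shows "\<not> local_reconstruction M d \<alpha> X0 W"
proof
  assume "local_reconstruction M d \<alpha> X0 W"
  then obtain e A y N c where e: "0 < e" and A: "\<And>t. finite (A t)" "\<And>t. A t \<subseteq> layer d t"
    "\<And>t. A t \<subseteq> window d (y t) N" "\<And>t. card (A t) \<le> N ^ Suc d"
    and often: "\<And>T. \<exists>t\<ge>T. sum c (A t) \<noteq> 0 \<and> e\<^sup>2 * kernel_form d a t (A t) c \<le> b ^ (2 * t) * (sum c (A t))\<^sup>2"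
    by (rule often_correlated_weights) (rule that)
  have n_pos: "0 < N ^ Suc d"
  proof -
    obtain t where "sum c (A t) \<noteq> 0" using often by blast
    then have "0 < card (A t)" using A(1) by (metis card_gt_0_iff sum.empty)
    then show ?thesis using A(4)[of t] by linarith
  qed
  define L where "L = e\<^sup>2 * (a\<^sup>2 * real (Suc d)) / real (N ^ Suc d)"
  have L: "0 < L" unfolding L_def using n_pos e alpha_pos by (intro divide_pos_pos) auto
  have "(\<lambda>t. (b\<^sup>2) ^ t) \<longlonglongrightarrow> 0"
    using b b_pos by (intro LIMSEQ_power_zero) (simp add: abs_square_less_1)
  then have "eventually (\<lambda>t. (b\<^sup>2) ^ t < L) sequentially" by (rule order_tendstoD(2)[OF _ L])
  then obtain T where T: "\<And>t. T \<le> t \<Longrightarrow> (b\<^sup>2) ^ t < L"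
    unfolding eventually_sequentially by auto
  obtain t where t: "Suc T \<le> t" "sum c (A t) \<noteq> 0"
    "e\<^sup>2 * kernel_form d a t (A t) c \<le> b ^ (2 * t) * (sum c (A t))\<^sup>2"
    using often by blast
  then obtain s where s: "t = Suc s" by (cases t) auto
  have "e\<^sup>2 * (a\<^sup>2 * real (Suc d)) \<le> real (N ^ Suc d) * b ^ (2 * t)"
    unfolding s by (rule fresh_noise_bound[OF A(1,2,4) t(2,3)[unfolded s]])
  then have "L \<le> b ^ (2 * t)" using n_pos by (simp add: L_def divide_le_eq mult.commute)
  then show False using T[of t] t(1) by (simp add: power_mult)
qed

lemma sum_abs_sq_le_kernel_form_critical:
  assumes b: "b = 1" and A: "finite A" "A \<subseteq> layer d (Suc t)" "card A \<le> n"
  shows "(\<Sum>u\<in>A. \<bar>c u\<bar>)\<^sup>2 \<le> n * real (Suc d) * kernel_form d a (Suc t) A c"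
proof -
  have "(\<Sum>u\<in>A. \<bar>c u\<bar>)\<^sup>2 \<le> (\<Sum>u\<in>A. (c u)\<^sup>2) * card A"
    using sum_squared_le_sum_of_squares[of "\<lambda>u. \<bar>c u\<bar>" A] by simp
  also have "\<dots> \<le> (\<Sum>u\<in>A. (c u)\<^sup>2) * n" using A by (intro mult_left_mono) (auto intro: sum_nonneg)
  also have "\<dots> = n * (b\<^sup>2 * (\<Sum>u\<in>A. (c u)\<^sup>2))"
    using b by simp
  also have "\<dots> = n * real (Suc d) * (a\<^sup>2 * real (Suc d) * (\<Sum>u\<in>A. (c u)\<^sup>2))"
    by (simp add: power2_eq_square algebra_simps)
  also have "\<dots> \<le> n * real (Suc d) * kernel_form d a (Suc t) A c"
    using kernel_form_Suc_ge[OF A(1,2)] by (intro mult_left_mono) auto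
  finally show ?thesis .
qed

lemma noise_kernel_defect_window_critical:
  assumes b: "b = 1" and u: "u \<in> window d y N" "u \<in> layer d t" and v: "v \<in> window d y N" "v \<in> layer d t"
  shows "F t 0 - F t (u - v) \<le> 4 ^ (Suc d * N) * real (Suc d)"
proof -
  have "F t 0 - F t (u - v) \<le> 4 ^ nat (l1_norm d (u - v)) * real (Suc d)"
    using noise_kernel_defect_unitv_critical[OF b] layer_diff_in_zero_sum[OF u(2) v(2)]
    by (intro noise_kernel_defect_l1) auto
  also have "\<dots> \<le> 4 ^ (Suc d * N) * real (Suc d)"
    using l1_norm_window_diff[OF u(1) v(1)]
    by (intro mult_right_mono power_increasing) (auto simp: nat_le_iff)
  finally show ?thesis .
qed

text \<open>If F t is nearly constant on the support, Cauchy-Schwarz against the row of v0 shows that the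
  kernel form is at least of order S^2 F t 0.\<close>
lemma kernel_form_ge_concentrated:
  assumes A: "finite A" "A \<subseteq> layer d t" "v0 \<in> A" and F0: "0 < F t 0"
    and defect: "\<And>u. u \<in> A \<Longrightarrow> F t 0 - F t (u - v0) \<le> D"
    and spread: "2 * ((\<Sum>u\<in>A. \<bar>c u\<bar>) * D) \<le> \<bar>sum c A\<bar> * F t 0"
  shows "(sum c A)\<^sup>2 * F t 0 \<le> 4 * kernel_form d a t A c"
proof -
  define B where "B = (\<Sum>u\<in>A. c u * F t (u - v0))"
  have defect_nonneg: "0 \<le> F t 0 - F t (u - v0)" if "u \<in> A" for u
    using noise_kernel_le_zero[OF layer_diff_in_zero_sum[of u d t v0]] A that by auto
  have "\<bar>\<Sum>u\<in>A. c u * (F t 0 - F t (u - v0))\<bar> \<le> (\<Sum>u\<in>A. \<bar>c u\<bar>) * D"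
    unfolding sum_distrib_right using defect defect_nonneg
    by (intro order.trans[OF sum_abs] sum_mono) (auto simp: abs_mult intro: mult_left_mono)
  moreover have "\<bar>sum c A * F t 0\<bar> - \<bar>\<Sum>u\<in>A. c u * (F t 0 - F t (u - v0))\<bar> \<le> \<bar>B\<bar>"
  proof -
    have "B = sum c A * F t 0 - (\<Sum>u\<in>A. c u * (F t 0 - F t (u - v0)))"
      unfolding B_def by (simp add: sum_subtractf sum_distrib_right algebra_simps)
    then show ?thesis by (simp only: abs_triangle_ineq2)
  qed
  ultimately have "\<bar>sum c A\<bar> * F t 0 / 2 \<le> \<bar>B\<bar>"
    using spread F0 by (simp add: abs_mult)
  then have "(\<bar>sum c A\<bar> * F t 0 / 2)\<^sup>2 \<le> B\<^sup>2"
    using F0 power_mono[of _ "\<bar>B\<bar>" 2] by auto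
  also have "\<dots> \<le> kernel_form d a t A c * F t 0"
    unfolding B_def by (rule kernel_form_cauchy_schwarz[OF A F0])
  finally have "((sum c A)\<^sup>2 * F t 0) * F t 0 \<le> (4 * kernel_form d a t A c) * F t 0"
    by (simp add: power2_eq_square algebra_simps)
  then show ?thesis using F0 by simp
qed

lemma noise_kernel_zero_le_critical:
  assumes b: "b = 1"
    and A: "finite A" "A \<subseteq> layer d (Suc t)" "A \<subseteq> window d y N" "v0 \<in> A" "card A \<le> n"
    and e: "0 < e" "e\<^sup>2 * kernel_form d a (Suc t) A c \<le> (sum c A)\<^sup>2" and S: "sum c A \<noteq> 0"
  defines "D \<equiv> 4 ^ (Suc d * N) * real (Suc d)"
  shows "F (Suc t) 0 \<le> max (2 * sqrt (n * real (Suc d)) / e * D) (4 / e\<^sup>2)"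
proof (rule ccontr)
  define R where "R = sqrt (n * real (Suc d)) / e"
  define S where "S = sum c A"
  assume "\<not> ?thesis"
  then have big: "2 * R * D < F (Suc t) 0" "4 / e\<^sup>2 < F (Suc t) 0" by (auto simp: R_def)
  have "0 < 4 / e\<^sup>2" using e(1) by simp
  then have F0: "0 < F (Suc t) 0" using big(2) by linarith
  have defect: "F (Suc t) 0 - F (Suc t) (u - v0) \<le> D" if "u \<in> A" for u
    using A that noise_kernel_defect_window_critical[OF b] unfolding D_def by blast
  have Q: "kernel_form d a (Suc t) A c \<le> S\<^sup>2 / e\<^sup>2"
    using e unfolding S_def by (simp add: pos_le_divide_eq mult.commute)
  have "(\<Sum>u\<in>A. \<bar>c u\<bar>)\<^sup>2 \<le> n * real (Suc d) * (S\<^sup>2 / e\<^sup>2)"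
    using order.trans[OF sum_abs_sq_le_kernel_form_critical[OF b A(1,2,5)] mult_left_mono[OF Q]]
    by (simp add: mult.assoc)
  also have "\<dots> = (R * \<bar>S\<bar>)\<^sup>2" by (simp add: R_def power_mult_distrib power_divide)
  finally have l1: "(\<Sum>u\<in>A. \<bar>c u\<bar>) \<le> R * \<bar>S\<bar>"
    by (rule power2_le_imp_le) (use e(1) in \<open>simp add: R_def\<close>)
  have "2 * ((\<Sum>u\<in>A. \<bar>c u\<bar>) * D) \<le> 2 * (R * \<bar>S\<bar> * D)"
    using l1 by (simp add: D_def mult_right_mono)
  also have "\<dots> \<le> \<bar>S\<bar> * F (Suc t) 0"
    using mult_left_mono[OF less_imp_le[OF big(1)], of "\<bar>S\<bar>"] by (simp add: mult_ac)
  finally have "S\<^sup>2 * F (Suc t) 0 \<le> 4 * kernel_form d a (Suc t) A c"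
    using kernel_form_ge_concentrated[OF A(1,2,4) F0 defect, of c] unfolding S_def by simp
  also have "\<dots> \<le> S\<^sup>2 * (4 / e\<^sup>2)" using Q by (simp add: field_simps)
  finally have "S\<^sup>2 * F (Suc t) 0 \<le> S\<^sup>2 * (4 / e\<^sup>2)" .
  then have "F (Suc t) 0 \<le> 4 / e\<^sup>2" by (rule mult_left_le_imp_le) (simp add: S_def S)
  then show False using big(2) by simp
qed


lemma single_vertex_reconstruction_critical:
  assumes b: "b = 1" and local: "local_reconstruction M d \<alpha> X0 W"
  shows "single_vertex_reconstruction M d \<alpha> X0 W"
proof (rule ccontr)
  assume no_single: "\<not> single_vertex_reconstruction M d \<alpha> X0 W"
  obtain e A y N c where e: "0 < e" and A: "\<And>t. finite (A t)" "\<And>t. A t \<subseteq> layer d t"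
    "\<And>t. A t \<subseteq> window d (y t) N" "\<And>t. card (A t) \<le> N ^ Suc d"
    and often: "\<And>T. \<exists>t\<ge>T. sum c (A t) \<noteq> 0 \<and> e\<^sup>2 * kernel_form d a t (A t) c \<le> b ^ (2 * t) * (sum c (A t))\<^sup>2"
    using local by (rule often_correlated_weights) (rule that)
  define K where "K = max (2 * sqrt (real (N ^ Suc d) * real (Suc d)) / e * (4 ^ (Suc d * N) * real (Suc d)))
    (4 / e\<^sup>2)"
  have "0 \<le> K" by (simp add: K_def le_max_iff_disj)
  then obtain T where T: "\<And>t. T \<le> t \<Longrightarrow> K < F t 0"
    using noise_kernel_dominates_if_no_single_vertex[OF no_single] b by auto
  obtain t where t: "Suc T \<le> t" "sum c (A t) \<noteq> 0"
    "e\<^sup>2 * kernel_form d a t (A t) c \<le> (sum c (A t))\<^sup>2"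
    using often b by fastforce
  then obtain s where s: "t = Suc s" by (cases t) auto
  obtain v0 where "v0 \<in> A t" using t(2) by fastforce
  then have "F t 0 \<le> K"
    using noise_kernel_zero_le_critical[OF b A(1,2,3)[of t, unfolded s] _ A(4)[of t, unfolded s] e]
      t(2,3) unfolding K_def s by simp
  then show False using T[of t] t(1) by simp
qed

lemma local_reconstruction_imp_single_vertex:
  assumes "local_reconstruction M d \<alpha> X0 W"
  shows "single_vertex_reconstruction M d \<alpha> X0 W"
proof -
  consider "b < 1" | "b = 1" | "1 < b" by linarith
  then show ?thesis
  proof cases
    case 1 then show ?thesis using no_local_reconstruction_subcritical assms by blast
  next
    case 2 then show ?thesis using single_vertex_reconstruction_critical assms by blast
  next
    case 3 then show ?thesis by (rule single_vertex_reconstruction_supercritical)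
  qed
qed

end

theorem mainTheorem5:
  fixes M :: "'a measure" and d :: nat and \<alpha> :: "nat \<Rightarrow> real"
    and X0 :: "'a \<Rightarrow> real" and W :: "(nat \<Rightarrow> int) \<times> (nat \<Rightarrow> int) \<Rightarrow> 'a \<Rightarrow> real"
  assumes "\<alpha> (Suc d) > 0"
    and "gaussian_model M d X0 W"
  shows "local_reconstruction M d \<alpha> X0 W \<longleftrightarrow> single_vertex_reconstruction M d \<alpha> X0 W"
proof
  interpret gaussian_broadcast_HS M d X0 W \<alpha>
    using assms by unfold_locales
  show "single_vertex_reconstruction M d \<alpha> X0 W" if "local_reconstruction M d \<alpha> X0 W"
    using that by (rule local_reconstruction_imp_single_vertex)
next
  show "local_reconstruction M d \<alpha> X0 W" if "single_vertex_reconstruction M d \<alpha> X0 W"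
    using that unfolding local_reconstruction_def single_vertex_reconstruction_def by blast
qed

end
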